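(* Let $S^P$ denote the complexity function of the family of maximal configurations resistant to predators (in the one-dimensional Riviera model). Then for every $\rho$ with $\frac{1}{2} < \rho < \frac{2}{3}$, $$S^P(\rho) = (1 - \rho) \ln(1 - \rho) - (2\rho - 1) \ln(2\rho - 1) - (2 - 3\rho) \ln(2 - 3\rho).$$
   Context: A configuration of length $n\ge 0$ is a binary string $c_1c_2\cdots c_n$; $c_k=1$ means lot $k$ is occupied by a house, $c_k=0$ that it is empty. A house at position $k$ is blocked (from sunlight) if $2\le k\le n-1$ and $c_{k-1}=c_{k+1}=1$; lots beyond the ends of the string never obstruct sunlight. A configuration is permissible if no house is blocked. It is maximal (jammed) if it is permissible and, for every $k$ with $c_k=0$, the string obtained by setting $c_k=1$ is not permissible. A maximal configuration is resistant to predators if, for every $k$ with $c_k=0$, in the string obtained by setting $c_k=1$ the new house at position $k$ is blocked. Let $J_{k,n}$ be the number of such configurations of length $n$ with exactly $k$ occupied lots; whenever $J_{k,n}=0$ it is redefined to be $1$. The complexity function is $S(\rho)=\sup \limsup_{i\to\infty} \frac{\ln J_{k_i,n_i}}{n_i}$, where the supremum ranges over all sequences $((k_i,n_i))_i$ of pairs of non-negative integers with $n_i\to\infty$ and $k_i/n_i\to\rho$. *)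

theory Defs
  imports Complex_Main "HOL-Library.Extended_Real" "HOL-Library.Liminf_Limsup"
begin

text \<open>A configuration of length n is a list c of booleans of length n;
  list index i (0-based) corresponds to lot i+1. True = occupied.\<close>

definition blocked :: "bool list \<Rightarrow> nat \<Rightarrow> bool" where
  "blocked c i \<longleftrightarrow> 1 \<le> i \<and> i + 1 < length c \<and> c ! (i - 1) \<and> c ! (i + 1)"

definition permissible :: "bool list \<Rightarrow> bool" where
  "permissible c \<longleftrightarrow> (\<forall>i < length c. c ! i \<longrightarrow> \<not> blocked c i)"

definition maximal_config :: "bool list \<Rightarrow> bool" where
  "maximal_config c \<longleftrightarrow> permissible c \<and>
     (\<forall>i < length c. \<not> c ! i \<longrightarrow> \<not> permissible (c[i := True]))"

definition resistant_config :: "bool list \<Rightarrow> bool" where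
  "resistant_config c \<longleftrightarrow> maximal_config c \<and>
     (\<forall>i < length c. \<not> c ! i \<longrightarrow> blocked (c[i := True]) i)"

definition JP :: "nat \<Rightarrow> nat \<Rightarrow> nat" where
  "JP k n = (let m = card {c :: bool list. length c = n \<and> resistant_config c \<and>
                                  length (filter id c) = k}
             in if m = 0 then 1 else m)"

definition complexityP :: "real \<Rightarrow> ereal" where
  "complexityP \<rho> = (SUP s \<in> {s :: nat \<Rightarrow> nat \<times> nat.
        filterlim (\<lambda>i. snd (s i)) at_top sequentially \<and>
        ((\<lambda>i. real (fst (s i)) / real (snd (s i))) \<longlonglongrightarrow> \<rho>)}.
      limsup (\<lambda>i. ereal (ln (real (JP (fst (s i)) (snd (s i)))) / real (snd (s i)))))"

end

theory Submission
  imports Defs "HOL-Library.Sublist" "HOL-Real_Asymp.Real_Asymp"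
begin

(* A configuration is resistant iff every empty lot lies between two houses and no three houses
   are adjacent, i.e. iff it reads w_0 0 w_1 0 ... 0 w_z with every block w_j equal to 1 or 11.
   With k houses on n lots there are z = n - k empty lots and 2k - n - 1 blocks 11, so
   J_{k,n} = C(n+1-k, 2k-n-1) as soon as this is positive, which holds for every density in
   (1/2, 2/3) once n is large. The bounds m ln m - m <= ln m! <= m ln m - m + O(ln m) then give
   ln C(b, d) = b ln b - d ln d - (b-d) ln (b-d) + O(ln b), so (1/n) ln J_{k_i,n_i} converges to
   the stated value along every admissible sequence, and the supremum of the limsups is that value. *)

section \<open>Resistant configurations as words avoiding factors\<close>

lemma sublist_iff_nth:
  "sublist w xs \<longleftrightarrow> (\<exists>i. i + length w \<le> length xs \<and> (\<forall>j<length w. xs ! (i + j) = w ! j))"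
proof
  assume "sublist w xs"
  then obtain ps ss where "xs = ps @ w @ ss" by (auto simp: sublist_def)
  then show "\<exists>i. i + length w \<le> length xs \<and> (\<forall>j<length w. xs ! (i + j) = w ! j)"
    by (intro exI[of _ "length ps"]) (simp add: nth_append)
next
  assume "\<exists>i. i + length w \<le> length xs \<and> (\<forall>j<length w. xs ! (i + j) = w ! j)"
  then obtain i where i: "i + length w \<le> length xs" "\<forall>j<length w. xs ! (i + j) = w ! j" by blast
  then have "take (length w) (drop i xs) = w" by (intro nth_equalityI) auto
  then have "xs = take i xs @ w @ drop (i + length w) xs"
    by (metis append_take_drop_id drop_drop add.commute)
  then show "sublist w xs" by (metis sublist_appendI)
qed

lemma sublist_pair_iff_nth:
  "sublist [a, b] xs \<longleftrightarrow> (\<exists>i. i + 2 \<le> length xs \<and> xs ! i = a \<and> xs ! (i + 1) = b)"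
  by (simp add: sublist_iff_nth numeral_2_eq_2 less_Suc_eq all_conj_distrib)

lemma sublist_triple_iff_nth:
  "sublist [a, b, c] xs \<longleftrightarrow>
     (\<exists>i. i + 3 \<le> length xs \<and> xs ! i = a \<and> xs ! (i + 1) = b \<and> xs ! (i + 2) = c)"
  by (simp add: sublist_iff_nth numeral_3_eq_3 less_Suc_eq all_conj_distrib)

lemma permissible_iff_not_sublist: "permissible c \<longleftrightarrow> \<not> sublist [True, True, True] c"
proof -
  have "(\<exists>i<length c. c ! i \<and> blocked c i) \<longleftrightarrow>
      (\<exists>i. i + 3 \<le> length c \<and> c ! i \<and> c ! (i + 1) \<and> c ! (i + 2))"
  proof
    assume "\<exists>i<length c. c ! i \<and> blocked c i"
    then obtain i where "c ! i" "1 \<le> i" "i + 1 < length c" "c ! (i - 1)" "c ! (i + 1)"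
      by (auto simp: blocked_def)
    then show "\<exists>i. i + 3 \<le> length c \<and> c ! i \<and> c ! (i + 1) \<and> c ! (i + 2)"
      by (intro exI[of _ "i - 1"]) (simp add: numeral_3_eq_3 numeral_2_eq_2)
  next
    assume "\<exists>i. i + 3 \<le> length c \<and> c ! i \<and> c ! (i + 1) \<and> c ! (i + 2)"
    then obtain i where "i + 3 \<le> length c" "c ! i" "c ! (i + 1)" "c ! (i + 2)" by blast
    then show "\<exists>i<length c. c ! i \<and> blocked c i"
      by (intro exI[of _ "i + 1"]) (auto simp: blocked_def)
  qed
  then show ?thesis unfolding permissible_def sublist_triple_iff_nth by blast
qed

lemma resistant_config_iff:
  "resistant_config c \<longleftrightarrow> permissible c \<and>
     (\<forall>i<length c. \<not> c ! i \<longrightarrow> 0 < i \<and> i + 1 < length c \<and> c ! (i - 1) \<and> c ! (i + 1))"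
proof -
  have "blocked (c[i := True]) i \<longleftrightarrow> 0 < i \<and> i + 1 < length c \<and> c ! (i - 1) \<and> c ! (i + 1)"
    if "i < length c" for i
    using that by (auto simp: blocked_def)
  moreover have "blocked c' i \<Longrightarrow> c' ! i \<Longrightarrow> \<not> permissible c'" for c' i
    by (auto simp: permissible_def blocked_def intro!: exI[of _ i])
  ultimately show ?thesis
    unfolding resistant_config_def maximal_config_def by (metis nth_list_update_eq)
qed

lemma isolated_gaps_iff_not_sublist:
  assumes "c \<noteq> []"
  shows "(\<forall>i<length c. \<not> c ! i \<longrightarrow> 0 < i \<and> i + 1 < length c \<and> c ! (i - 1) \<and> c ! (i + 1)) \<longleftrightarrow>
    \<not> sublist [False, False] (False # c @ [False])" (is "?gaps \<longleftrightarrow> _")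
proof -
  define p where "p = False # c @ [False]"
  have p0: "p ! 0 = False" and pSuc: "p ! Suc i = (i < length c \<and> c ! i)" if "i \<le> length c" for i
    using that by (auto simp: p_def nth_append)
  have "?gaps \<longleftrightarrow> (\<forall>i. i + 2 \<le> length p \<longrightarrow> p ! i \<or> p ! (i + 1))"
  proof
    assume gaps: ?gaps
    show "\<forall>i. i + 2 \<le> length p \<longrightarrow> p ! i \<or> p ! (i + 1)"
    proof (intro allI impI)
      fix i assume "i + 2 \<le> length p"
      then have i: "i \<le> length c" by (simp add: p_def)
      show "p ! i \<or> p ! (i + 1)"
      proof (cases i)
        case 0
        then show ?thesis using gaps assms p0 pSuc[of 0] by auto
      next
        case (Suc j)
        then have "p ! i = c ! j" "p ! (i + 1) = (j + 1 < length c \<and> c ! (j + 1))"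
          using i pSuc[of j] pSuc[of i] by auto
        moreover have "j < length c" using i Suc by simp
        ultimately show ?thesis using gaps by auto
      qed
    qed
  next
    assume windows: "\<forall>i. i + 2 \<le> length p \<longrightarrow> p ! i \<or> p ! (i + 1)"
    show ?gaps
    proof (intro allI impI)
      fix i assume i: "i < length c" "\<not> c ! i"
      have "p ! i" using windows[rule_format, of i] i pSuc[of i] by (simp add: p_def)
      then have left: "0 < i \<and> c ! (i - 1)" using p0 pSuc[of "i - 1"] i by (cases i) auto
      have "p ! (i + 2)" using windows[rule_format, of "i + 1"] i pSuc[of i] by (simp add: p_def)
      then have right: "i + 1 < length c \<and> c ! (i + 1)" using pSuc[of "i + 1"] i by simp
      show "0 < i \<and> i + 1 < length c \<and> c ! (i - 1) \<and> c ! (i + 1)" using left right by blast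
    qed
  qed
  then show ?thesis unfolding sublist_pair_iff_nth p_def[symmetric] by auto
qed

(* Padding with an empty lot on each side makes "every empty lot lies between two houses"
   equivalent to the absence of two adjacent empty lots. *)
definition resistant_word :: "bool list \<Rightarrow> bool" where
  "resistant_word c \<longleftrightarrow>
     \<not> sublist [True, True, True] c \<and> \<not> sublist [False, False] (False # c @ [False])"

lemma resistant_config_iff_resistant_word:
  "c \<noteq> [] \<Longrightarrow> resistant_config c \<longleftrightarrow> resistant_word c"
  unfolding resistant_config_iff permissible_iff_not_sublist resistant_word_def
  using isolated_gaps_iff_not_sublist by blast

lemma resistant_word_simps [simp]:
  "\<not> resistant_word []"
  "\<not> resistant_word (False # c)"
  "resistant_word [True]"
  "resistant_word [True, True]"
  "\<not> resistant_word (True # True # True # c)"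
  "resistant_word (True # False # c) \<longleftrightarrow> resistant_word c"
  "resistant_word (True # True # False # c) \<longleftrightarrow> resistant_word c"
  by (simp_all add: resistant_word_def sublist_Cons_right)

lemma resistant_word_cases:
  assumes "resistant_word c"
  obtains "c = [True]" | "c = [True, True]"
    | r where "resistant_word r" "c = True # False # r"
    | r where "resistant_word r" "c = True # True # False # r"
proof -
  consider "c = []" | r where "c = False # r" | "c = [True]" | "c = [True, True]"
    | r where "c = True # False # r" | r where "c = True # True # False # r"
    | r where "c = True # True # True # r"
    by (metis (full_types) list.exhaust)
  then show thesis using assms that by cases auto
qed

section \<open>Counting resistant configurations\<close>

(* The z empty lots cut the houses into z + 1 blocks of one or two houses, d of them pairs. *)
definition resistant_words :: "nat \<Rightarrow> nat \<Rightarrow> bool list set" where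
  "resistant_words z d =
     {c. resistant_word c \<and> length (filter Not c) = z \<and> length (filter id c) = Suc z + d}"

lemma resistant_words_0:
  "resistant_words 0 d = (if d = 0 then {[True]} else if d = 1 then {[True, True]} else {})"
  by (auto simp: resistant_words_def elim: resistant_word_cases)

lemma resistant_word_fewer_empty_lots:
  "resistant_word c \<Longrightarrow> length (filter Not c) < length (filter id c)"
proof (induction c rule: length_induct)
  case (1 c)
  have IH: "length (filter Not r) < length (filter id r)"
    if "resistant_word r" "length r < length c" for r
    using 1(1) that by blast
  from 1(2) show ?case
  proof (cases rule: resistant_word_cases)
    case (3 r)
    then show ?thesis using IH[of r] by (simp add: id_def)
  next
    case (4 r)
    then show ?thesis using IH[of r] by (simp add: id_def)
  qed simp_all
qed

lemma resistant_words_Suc_0: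
  "resistant_words (Suc z) 0 = (\<lambda>r. True # False # r) ` resistant_words z 0"
proof
  show "resistant_words (Suc z) 0 \<subseteq> (\<lambda>r. True # False # r) ` resistant_words z 0"
  proof
    fix c assume "c \<in> resistant_words (Suc z) 0"
    then have "resistant_word c" "length (filter Not c) = Suc z"
      "length (filter id c) = Suc (Suc z)"
      by (auto simp: resistant_words_def)
    then show "c \<in> (\<lambda>r. True # False # r) ` resistant_words z 0"
      by (cases rule: resistant_word_cases)
        (auto simp: resistant_words_def dest: resistant_word_fewer_empty_lots)
  qed
qed (auto simp: resistant_words_def)

lemma resistant_words_Suc_Suc:
  "resistant_words (Suc z) (Suc d) =
     (\<lambda>r. True # False # r) ` resistant_words z (Suc d) \<union>
     (\<lambda>r. True # True # False # r) ` resistant_words z d"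
  by (auto simp: resistant_words_def elim: resistant_word_cases)

lemma finite_resistant_words: "finite (resistant_words z d)"
proof (rule finite_subset)
  show "resistant_words z d \<subseteq> {c. set c \<subseteq> UNIV \<and> length c = z + Suc z + d}"
  proof
    fix c assume "c \<in> resistant_words z d"
    then show "c \<in> {c. set c \<subseteq> UNIV \<and> length c = z + Suc z + d}"
      using sum_length_filter_compl[of id c] by (simp add: resistant_words_def)
  qed
qed (rule finite_lists_length_eq, simp)

lemma card_resistant_words: "card (resistant_words z d) = Suc z choose d"
proof (induction z arbitrary: d)
  case 0
  show ?case by (simp add: resistant_words_0 binomial_eq_0)
next
  case (Suc z)
  show ?case
  proof (cases d)
    case 0
    then show ?thesis by (simp add: resistant_words_Suc_0 card_image inj_on_def Suc.IH)
  next
    case (Suc d')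
    have "card (resistant_words (Suc z) d) =
        card ((\<lambda>r. True # False # r) ` resistant_words z (Suc d')) +
        card ((\<lambda>r. True # True # False # r) ` resistant_words z d')"
      unfolding Suc resistant_words_Suc_Suc
      by (rule card_Un_disjoint) (auto simp: finite_resistant_words)
    also have "\<dots> = card (resistant_words z (Suc d')) + card (resistant_words z d')"
      by (simp add: card_image inj_on_def)
    finally show ?thesis by (simp add: Suc Suc.IH)
  qed
qed

section \<open>Logarithmic asymptotics of binomial coefficients\<close>

lemma power_div_fact_le_exp:
  fixes x :: real
  assumes "0 \<le> x"
  shows "x ^ m / fact m \<le> exp x"
proof -
  have "(\<lambda>n. x ^ n / fact n) sums exp x"
    using exp_converges[of x] by (simp add: divide_inverse_commute)
  then have "(\<Sum>n\<in>{m}. x ^ n / fact n) \<le> exp x"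
    using assms by (intro sums_le[OF _ sums_If_finite_set]) (auto simp: sums_summable)
  then show ?thesis by simp
qed

lemma ln_fact_ge: "real m * ln (real m) - real m \<le> ln (fact m)"
proof (cases "m = 0")
  case False
  then have "real m ^ m \<le> exp (real m) * fact m"
    using power_div_fact_le_exp[of "real m" m] by (simp add: divide_le_eq)
  then have "ln (real m ^ m) \<le> ln (exp (real m) * fact m)"
    using False by (subst ln_le_cancel_iff) auto
  then show ?thesis using False by (simp add: ln_realpow ln_mult)
qed simp

lemma ln_fact_le: "ln (fact m) \<le> real m * ln (real m) - real m + ln (real m + 1) + 1"
proof -
  have upper: "ln (fact j) \<le> (real j + 1) * ln (real j + 1) - real j" for j :: nat
  proof (induction j)
    case (Suc j)
    have "ln ((real j + 1) / (real j + 2)) \<le> (real j + 1) / (real j + 2) - 1"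
      by (rule ln_le_minus_one) simp
    then have "1 \<le> (real j + 2) * (ln (real j + 2) - ln (real j + 1))"
      by (simp add: ln_div field_simps)
    moreover have "ln (fact (Suc j)) = ln (fact j) + ln (real j + 1)"
      by (simp add: ln_mult add.commute)
    ultimately show ?case using Suc.IH by (simp add: algebra_simps)
  qed simp
  have "ln (1 + 1 / real m) \<le> 1 / real m"
    by (rule ln_add_one_self_le_self) simp
  then have "real m * (ln (real m + 1) - ln (real m)) \<le> 1"
    by (cases "m = 0") (simp_all add: ln_div field_simps)
  then show ?thesis using upper[of m] by (simp add: algebra_simps)
qed

(* The exponential growth rate of the binomial coefficient C(x n, y n). *)
definition binomial_entropy :: "real \<Rightarrow> real \<Rightarrow> real" where
  "binomial_entropy x y = x * ln x - y * ln y - (x - y) * ln (x - y)"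

lemma ln_binomial_estimate:
  assumes "d \<le> b"
  shows "\<bar>ln (real (b choose d)) - binomial_entropy (real b) (real d)\<bar> \<le> 2 * ln (real b + 1) + 2"
proof -
  have "ln (real (b choose d)) = ln (fact b) - ln (fact d) - ln (fact (b - d))"
    using assms by (simp add: binomial_fact ln_div ln_mult)
  moreover have "ln (real d + 1) \<le> ln (real b + 1)" "ln (real b - real d + 1) \<le> ln (real b + 1)"
    using assms by auto
  ultimately show ?thesis
    using ln_fact_ge[of b] ln_fact_ge[of d] ln_fact_ge[of "b - d", unfolded of_nat_diff[OF assms]]
      ln_fact_le[of b] ln_fact_le[of d] ln_fact_le[of "b - d", unfolded of_nat_diff[OF assms]]
    unfolding abs_le_iff binomial_entropy_def by linarith
qed

lemma binomial_entropy_homogeneous: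
  fixes x y n :: real
  assumes "0 \<le> y" "y \<le> x" "0 < n"
  shows "binomial_entropy x y = n * binomial_entropy (x / n) (y / n)"
proof -
  consider "y = 0" | "y = x" | "0 < y" "y < x"
    using assms by linarith
  then show ?thesis
  proof cases
    case 3
    then have ln_div_n: "ln (x / n) = ln x - ln n" "ln (y / n) = ln y - ln n"
      "ln (x / n - y / n) = ln (x - y) - ln n"
      using assms by (simp_all add: ln_div diff_divide_distrib[symmetric])
    show ?thesis
      unfolding binomial_entropy_def ln_div_n using assms by (simp add: field_simps)
  qed (simp_all add: binomial_entropy_def)
qed

lemma one_over_tendsto_0:
  fixes n :: "nat \<Rightarrow> nat"
  assumes "filterlim n at_top sequentially"
  shows "(\<lambda>i. 1 / real (n i)) \<longlonglongrightarrow> 0"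
  by (intro tendsto_divide_0[OF tendsto_const] filterlim_at_top_imp_at_infinity
      filterlim_compose[OF filterlim_real_sequentially assms])

lemma ln_plus_one_over_tendsto_0:
  fixes b n :: "nat \<Rightarrow> nat"
  assumes n: "filterlim n at_top sequentially"
    and b: "(\<lambda>i. real (b i) / real (n i)) \<longlonglongrightarrow> \<beta>" and "0 < \<beta>"
  shows "(\<lambda>i. ln (real (b i) + 1) / real (n i)) \<longlonglongrightarrow> 0"
proof -
  have n_real: "filterlim (\<lambda>i. real (n i)) at_top sequentially"
    by (rule filterlim_compose[OF filterlim_real_sequentially n])
  have "eventually (\<lambda>i. 0 < n i) sequentially"
    by (rule eventually_compose_filterlim[OF eventually_gt_at_top n])
  then have "eventually (\<lambda>i. real (b i) / real (n i) * real (n i) = real (b i)) sequentially"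
    by (rule eventually_mono) simp
  from filterlim_cong[OF refl refl this]
  have b_real: "filterlim (\<lambda>i. real (b i)) at_top sequentially"
    using filterlim_tendsto_pos_mult_at_top[OF b \<open>0 < \<beta>\<close> n_real] by simp
  have "((\<lambda>x::real. ln (x + 1) / (x + 1)) \<longlongrightarrow> 0) at_top"
    by real_asymp
  then have "(\<lambda>i. ln (real (b i) + 1) / (real (b i) + 1)) \<longlonglongrightarrow> 0"
    by (rule filterlim_compose[OF _ b_real])
  moreover have "(\<lambda>i. real (b i) / real (n i) + 1 / real (n i)) \<longlonglongrightarrow> \<beta> + 0"
    by (intro tendsto_add b one_over_tendsto_0[OF n])
  ultimately have "(\<lambda>i. ln (real (b i) + 1) / (real (b i) + 1) *
      (real (b i) / real (n i) + 1 / real (n i))) \<longlonglongrightarrow> 0 * (\<beta> + 0)"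
    by (rule tendsto_mult)
  then show ?thesis by (simp add: add_divide_distrib[symmetric])
qed

lemma ln_binomial_error_over_tendsto_0:
  fixes b d n :: "nat \<Rightarrow> nat"
  assumes n: "filterlim n at_top sequentially"
    and b: "(\<lambda>i. real (b i) / real (n i)) \<longlonglongrightarrow> \<beta>" and "0 < \<beta>"
    and "eventually (\<lambda>i. d i \<le> b i) sequentially"
  shows "(\<lambda>i. (ln (real (b i choose d i)) - binomial_entropy (real (b i)) (real (d i))) / real (n i))
           \<longlonglongrightarrow> 0"
proof (rule tendsto_0_le)
  show "(\<lambda>i. 2 * (ln (real (b i) + 1) / real (n i)) + 2 * (1 / real (n i))) \<longlonglongrightarrow> 0"
    by (intro tendsto_add_zero tendsto_mult_right_zero one_over_tendsto_0[OF n]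
        ln_plus_one_over_tendsto_0[OF n b \<open>0 < \<beta>\<close>])
  show "eventually (\<lambda>i. norm ((ln (real (b i choose d i)) -
        binomial_entropy (real (b i)) (real (d i))) / real (n i)) \<le>
      norm (2 * (ln (real (b i) + 1) / real (n i)) + 2 * (1 / real (n i))) * 1) sequentially"
    using \<open>eventually (\<lambda>i. d i \<le> b i) sequentially\<close>
  proof eventually_elim
    case (elim i)
    have "\<bar>ln (real (b i choose d i)) - binomial_entropy (real (b i)) (real (d i))\<bar> / real (n i)
        \<le> (2 * ln (real (b i) + 1) + 2) / real (n i)"
      by (rule divide_right_mono[OF ln_binomial_estimate[OF elim]]) simp
    moreover have "0 \<le> ln (real (b i) + 1)"
      by simp
    ultimately show ?case
      by (simp add: add_divide_distrib)
  qed
qed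

lemma ln_binomial_over_tendsto:
  fixes b d n :: "nat \<Rightarrow> nat" and \<beta> \<delta> :: real
  assumes n: "filterlim n at_top sequentially"
    and b: "(\<lambda>i. real (b i) / real (n i)) \<longlonglongrightarrow> \<beta>"
    and d: "(\<lambda>i. real (d i) / real (n i)) \<longlonglongrightarrow> \<delta>"
    and "0 < \<delta>" "\<delta> < \<beta>"
  shows "(\<lambda>i. ln (real (b i choose d i)) / real (n i)) \<longlonglongrightarrow> binomial_entropy \<beta> \<delta>"
proof -
  have "(\<lambda>i. real (b i) / real (n i) - real (d i) / real (n i)) \<longlonglongrightarrow> \<beta> - \<delta>"
    by (intro tendsto_diff b d)
  then have "eventually (\<lambda>i. 0 < real (b i) / real (n i) - real (d i) / real (n i)) sequentially"
    using \<open>\<delta> < \<beta>\<close> by (intro order_tendstoD) auto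
  moreover have "eventually (\<lambda>i. 0 < n i) sequentially"
    by (rule eventually_compose_filterlim[OF eventually_gt_at_top n])
  ultimately have large: "eventually (\<lambda>i. d i < b i \<and> 0 < n i) sequentially"
    by eventually_elim (simp add: diff_divide_distrib[symmetric] zero_less_divide_iff)
  have "(\<lambda>i. binomial_entropy (real (b i) / real (n i)) (real (d i) / real (n i)) +
      (ln (real (b i choose d i)) - binomial_entropy (real (b i)) (real (d i))) / real (n i))
      \<longlonglongrightarrow> binomial_entropy \<beta> \<delta> + 0"
  proof (intro tendsto_add)
    show "(\<lambda>i. binomial_entropy (real (b i) / real (n i)) (real (d i) / real (n i)))
        \<longlonglongrightarrow> binomial_entropy \<beta> \<delta>"
      unfolding binomial_entropy_def using assms by (intro tendsto_intros b d) auto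
    show "(\<lambda>i. (ln (real (b i choose d i)) - binomial_entropy (real (b i)) (real (d i))) /
        real (n i)) \<longlonglongrightarrow> 0"
      using large assms by (intro ln_binomial_error_over_tendsto_0[OF n b]) (auto elim: eventually_mono)
  qed
  moreover have "eventually (\<lambda>i.
      binomial_entropy (real (b i) / real (n i)) (real (d i) / real (n i)) +
      (ln (real (b i choose d i)) - binomial_entropy (real (b i)) (real (d i))) / real (n i) =
      ln (real (b i choose d i)) / real (n i)) sequentially"
    using large
  proof eventually_elim
    case (elim i)
    then have "binomial_entropy (real (b i)) (real (d i)) =
        real (n i) * binomial_entropy (real (b i) / real (n i)) (real (d i) / real (n i))"
      by (intro binomial_entropy_homogeneous) auto
    then show ?case
      using elim by (simp add: field_simps)
  qed
  ultimately show ?thesis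
    using Lim_transform_eventually by fastforce
qed

section \<open>The complexity function\<close>

lemma JP_eq_binomial:
  assumes "n < 2 * k" "3 * k \<le> 2 * n + 2"
  shows "JP k n = (n + 1 - k) choose (2 * k - n - 1)"
proof -
  have "k \<le> n" "n \<noteq> 0"
    using assms by arith+
  have "length c = n \<and> resistant_config c \<and> length (filter id c) = k \<longleftrightarrow>
      c \<in> resistant_words (n - k) (2 * k - n - 1)" for c
    using sum_length_filter_compl[of id c] resistant_config_iff_resistant_word[of c] assms \<open>n \<noteq> 0\<close>
    by (auto simp: resistant_words_def)
  then have "{c. length c = n \<and> resistant_config c \<and> length (filter id c) = k} =
      resistant_words (n - k) (2 * k - n - 1)"
    by blast
  moreover have "n + 1 - k = Suc (n - k)" "2 * k - n - 1 \<le> Suc (n - k)"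
    using assms \<open>k \<le> n\<close> by linarith+
  ultimately show ?thesis
    by (simp add: JP_def card_resistant_words)
qed

lemma eventually_binomial_regime:
  fixes k n :: "nat \<Rightarrow> nat" and \<rho> :: real
  assumes n: "filterlim n at_top sequentially"
    and k: "(\<lambda>i. real (k i) / real (n i)) \<longlonglongrightarrow> \<rho>"
    and "1 / 2 < \<rho>" "\<rho> < 2 / 3"
  shows "eventually (\<lambda>i. n i < 2 * k i \<and> 3 * k i < 2 * n i + 2 \<and> 0 < n i) sequentially"
proof -
  have inv: "(\<lambda>i. 1 / real (n i)) \<longlonglongrightarrow> 0"
    using n by (rule one_over_tendsto_0)
  have "(\<lambda>i. 2 * (real (k i) / real (n i)) - 1 - 1 / real (n i)) \<longlonglongrightarrow> 2 * \<rho> - 1 - 0"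
    by (intro tendsto_intros k inv)
  then have "eventually (\<lambda>i. 0 < 2 * (real (k i) / real (n i)) - 1 - 1 / real (n i)) sequentially"
    using \<open>1 / 2 < \<rho>\<close> by (intro order_tendstoD) auto
  moreover have "(\<lambda>i. 2 + 2 * (1 / real (n i)) - 3 * (real (k i) / real (n i)))
      \<longlonglongrightarrow> 2 + 2 * 0 - 3 * \<rho>"
    by (intro tendsto_intros k inv)
  then have "eventually (\<lambda>i. 0 < 2 + 2 * (1 / real (n i)) - 3 * (real (k i) / real (n i)))
      sequentially"
    using \<open>\<rho> < 2 / 3\<close> by (intro order_tendstoD) auto
  moreover have "eventually (\<lambda>i. 0 < n i) sequentially"
    by (rule eventually_compose_filterlim[OF eventually_gt_at_top n])
  ultimately show ?thesis
  proof eventually_elim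
    case (elim i)
    then have "2 * (real (k i) / real (n i)) - 1 - 1 / real (n i) =
        (2 * real (k i) - real (n i) - 1) / real (n i)"
      "2 + 2 * (1 / real (n i)) - 3 * (real (k i) / real (n i)) =
        (2 * real (n i) + 2 - 3 * real (k i)) / real (n i)"
      by (simp_all add: field_simps)
    then have "real (n i) < real (2 * k i)" "real (3 * k i) < real (2 * n i + 2)"
      using elim by (simp_all add: zero_less_divide_iff)
    then show ?case
      using elim(3) by (simp only: of_nat_less_iff)
  qed
qed

lemma ln_JP_over_tendsto:
  fixes k n :: "nat \<Rightarrow> nat" and \<rho> :: real
  assumes n: "filterlim n at_top sequentially"
    and k: "(\<lambda>i. real (k i) / real (n i)) \<longlonglongrightarrow> \<rho>"
    and "1 / 2 < \<rho>" "\<rho> < 2 / 3"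
  shows "(\<lambda>i. ln (real (JP (k i) (n i))) / real (n i))
           \<longlonglongrightarrow> binomial_entropy (1 - \<rho>) (2 * \<rho> - 1)"
proof -
  define b where "b i = n i + 1 - k i" for i
  define d where "d i = 2 * k i - n i - 1" for i
  have regime: "eventually (\<lambda>i. n i < 2 * k i \<and> 3 * k i < 2 * n i + 2 \<and> 0 < n i) sequentially"
    using eventually_binomial_regime[OF n k] assms by blast
  have inv: "(\<lambda>i. 1 / real (n i)) \<longlonglongrightarrow> 0"
    using n by (rule one_over_tendsto_0)
  have b_ratio: "(\<lambda>i. real (b i) / real (n i)) \<longlonglongrightarrow> 1 - \<rho>"
  proof (rule Lim_transform_eventually)
    show "(\<lambda>i. 1 + 1 / real (n i) - real (k i) / real (n i)) \<longlonglongrightarrow> 1 - \<rho>"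
      using tendsto_diff[OF tendsto_add[OF tendsto_const inv] k] by simp
    show "eventually (\<lambda>i. 1 + 1 / real (n i) - real (k i) / real (n i) = real (b i) / real (n i))
        sequentially"
      using regime by (rule eventually_mono) (simp add: b_def field_simps)
  qed
  have d_ratio: "(\<lambda>i. real (d i) / real (n i)) \<longlonglongrightarrow> 2 * \<rho> - 1"
  proof (rule Lim_transform_eventually)
    show "(\<lambda>i. 2 * (real (k i) / real (n i)) - 1 - 1 / real (n i)) \<longlonglongrightarrow> 2 * \<rho> - 1"
      using tendsto_diff[OF tendsto_diff[OF tendsto_mult[OF tendsto_const k] tendsto_const] inv]
      by simp
    show "eventually (\<lambda>i. 2 * (real (k i) / real (n i)) - 1 - 1 / real (n i) =
        real (d i) / real (n i)) sequentially"
      using regime by (rule eventually_mono) (simp add: d_def field_simps)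
  qed
  have "(\<lambda>i. ln (real (b i choose d i)) / real (n i)) \<longlonglongrightarrow> binomial_entropy (1 - \<rho>) (2 * \<rho> - 1)"
    using assms by (intro ln_binomial_over_tendsto[OF n b_ratio d_ratio]) auto
  moreover have "eventually (\<lambda>i. ln (real (b i choose d i)) / real (n i) =
      ln (real (JP (k i) (n i))) / real (n i)) sequentially"
    using regime by (rule eventually_mono) (simp add: JP_eq_binomial b_def d_def)
  ultimately show ?thesis
    by (rule Lim_transform_eventually)
qed

lemma floor_mult_over_tendsto:
  fixes \<rho> :: real
  assumes "0 \<le> \<rho>"
  shows "(\<lambda>i. real (nat \<lfloor>\<rho> * real i\<rfloor>) / real i) \<longlonglongrightarrow> \<rho>"
proof (rule tendsto_sandwich)
  show "eventually (\<lambda>i. \<rho> - 1 / real i \<le> real (nat \<lfloor>\<rho> * real i\<rfloor>) / real i) sequentially"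
    using eventually_gt_at_top[of 0]
  proof eventually_elim
    case (elim i)
    then have "\<rho> - 1 / real i = (\<rho> * real i - 1) / real i"
      by (simp add: field_simps)
    also have "\<dots> \<le> real (nat \<lfloor>\<rho> * real i\<rfloor>) / real i"
      using assms by (intro divide_right_mono) linarith+
    finally show ?case .
  qed
  show "eventually (\<lambda>i. real (nat \<lfloor>\<rho> * real i\<rfloor>) / real i \<le> \<rho>) sequentially"
    using eventually_gt_at_top[of 0]
  proof eventually_elim
    case (elim i)
    have "real (nat \<lfloor>\<rho> * real i\<rfloor>) / real i \<le> \<rho> * real i / real i"
      using assms by (intro divide_right_mono of_nat_floor) auto
    then show ?case using elim by simp
  qed
  show "(\<lambda>i. \<rho> - 1 / real i) \<longlonglongrightarrow> \<rho>"
    using tendsto_diff[OF tendsto_const lim_const_over_n[of 1]] by simp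
qed simp

theorem mainTheorem1:
  fixes \<rho> :: real
  assumes "1/2 < \<rho>" and "\<rho> < 2/3"
  shows "complexityP \<rho> = ereal ((1 - \<rho>) * ln (1 - \<rho>) - (2*\<rho> - 1) * ln (2*\<rho> - 1)
                                - (2 - 3*\<rho>) * ln (2 - 3*\<rho>))"
proof -
  define L where "L = binomial_entropy (1 - \<rho>) (2 * \<rho> - 1)"
  define A where "A = {s :: nat \<Rightarrow> nat \<times> nat. filterlim (\<lambda>i. snd (s i)) at_top sequentially \<and>
    (\<lambda>i. real (fst (s i)) / real (snd (s i))) \<longlonglongrightarrow> \<rho>}"
  have limsup_eq: "limsup (\<lambda>i. ereal (ln (real (JP (fst (s i)) (snd (s i)))) / real (snd (s i))))
      = ereal L" if "s \<in> A" for s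
    using that assms unfolding A_def L_def
    by (intro lim_imp_Limsup trivial_limit_sequentially tendsto_ereal ln_JP_over_tendsto) auto
  have witness: "(\<lambda>i. (nat \<lfloor>\<rho> * real i\<rfloor>, i)) \<in> A"
    unfolding A_def mem_Collect_eq fst_conv snd_conv
    using assms by (intro conjI filterlim_ident floor_mult_over_tendsto) auto
  have "complexityP \<rho> = (SUP s\<in>A. ereal L)"
    unfolding complexityP_def A_def[symmetric] using limsup_eq by (intro SUP_cong) auto
  also have "\<dots> = ereal L"
    using witness by (intro SUP_const) auto
  finally show ?thesis
    by (simp add: L_def binomial_entropy_def)
qed

end
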